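(* Let $n=2$. (1) Every final admissible word $\omega$ has the form $\omega=\tau*j_1^\infty*\mathsf{ext}*j_2^k*j_2^\infty*\mathsf{ext}$ with $\tau\in[2]^*$, $\{j_1,j_2\}=\{1,2\}$ and $k\ge0$. For such $\omega$ put $N_\omega:=e_{j_2}^TM_\omega$ (a row vector). Then (2) $N_\omega\ge0$ entrywise, its entries are coprime, and $N_\omega=e_i^T$ is possible only for $i=j_2$. (3) Modulo the equivalence relation on words generated by replacing a subword $j\,j^\infty$ by $j^\infty$ ($j\in\{1,2\}$), a final admissible word $\omega$ is uniquely determined by the pair $(N_\omega,j_1)$. (4) Conversely, for every row vector $N\in\mathbb{Z}^{1\times2}_{\ge0}$ with coprime entries and every $j_1\in\{1,2\}$ with $N\ne e_{j_1}^T$, there is a final admissible $\omega$ of the form in (1) with this $j_1$ such that $N_\omega=N$.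
   Context: Here $n=2$, $e_1,e_2$ standard basis of $\mathbb{Z}^2$. The alphabet is $L=\{1,2,1^\infty,2^\infty,\mathsf{ext}\}$ (each $j^\infty$ and $\mathsf{ext}$ is a single letter); $\varepsilon$ is the empty word, $*$ concatenation, $j^k$ denotes $k$ copies of the letter $j$. A finite word $\omega$ over $L$ is admissible if: (i) whenever $j^\infty$ occurs, the subsequent part of $\omega$ contains neither $j$ nor $j^\infty$; (ii) the only letter allowed directly after $j^\infty$ is $\mathsf{ext}$; (iii) every $\mathsf{ext}$ occurs directly after some $j^\infty$. It is final if it contains the subword $j^\infty\mathsf{ext}$ for every $j\in\{1,2\}$. $X(\omega)$ is the set of $j$ such that $j^\infty\mathsf{ext}$ is a subword of $\omega$, $Y(\omega)=\{1,2\}\setminus X(\omega)$. Define recursively $\delta^i_\omega$: $\delta^i_\varepsilon=e_i$; $\delta^i_{\omega*j^\infty}=\delta^i_{\omega*\mathsf{ext}}=\delta^i_\omega$; $\delta^i_{\omega*j}=\delta^i_\omega$ if $i\in X(\omega)\cup\{j\}$ and $\delta^i_{\omega*j}=\delta^i_\omega-\delta^j_\omega$ if $i\in Y(\omega)\setminus\{j\}$. Let $M_\omega=(\delta^1_\omega\ \delta^2_\omega)^{-1}$, the inverse of the matrix with columns $\delta^1_\omega,\delta^2_\omega$. *)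

theory Defs
  imports "HOL-Analysis.Analysis"
begin

text \<open>Alphabet L = {1,2,1^inf,2^inf,ext}; the index set [2] = {1,2} is the numeral type 2
  (whose two elements are written 1 and 2).\<close>
datatype letter = Fin "2" | Inf "2" | Ext

definition admissible :: "letter list \<Rightarrow> bool" where
  "admissible w \<longleftrightarrow>
     (\<forall>p q j. p < q \<and> q < length w \<and> w ! p = Inf j \<longrightarrow> w ! q \<noteq> Fin j \<and> w ! q \<noteq> Inf j) \<and>
     (\<forall>p j. Suc p < length w \<and> w ! p = Inf j \<longrightarrow> w ! Suc p = Ext) \<and>
     (\<forall>p. p < length w \<and> w ! p = Ext \<longrightarrow> (\<exists>q j. Suc q = p \<and> w ! q = Inf j))"

definition Xw :: "letter list \<Rightarrow> 2 set" where
  "Xw w = {j. \<exists>p. Suc p < length w \<and> w ! p = Inf j \<and> w ! Suc p = Ext}"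

definition final :: "letter list \<Rightarrow> bool" where
  "final w \<longleftrightarrow> (\<forall>j::2. j \<in> Xw w)"

text \<open>delta on the reversed word (so that the recursion on the last letter is structural).
  Since i ranges over {1,2}, "i in Y(w) - {j}" is "not (i in X(w) or i = j)".\<close>
fun delta_rev :: "letter list \<Rightarrow> 2 \<Rightarrow> real^2" where
  "delta_rev [] i = axis i 1"
| "delta_rev (Inf j # ws) i = delta_rev ws i"
| "delta_rev (Ext # ws) i = delta_rev ws i"
| "delta_rev (Fin j # ws) i =
     (if i \<in> Xw (rev ws) \<or> i = j then delta_rev ws i else delta_rev ws i - delta_rev ws j)"

definition delta :: "letter list \<Rightarrow> 2 \<Rightarrow> real^2" where
  "delta w i = delta_rev (rev w) i"

definition Mmat :: "letter list \<Rightarrow> real^2^2" where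
  "Mmat w = matrix_inv (\<chi> r c. delta w c $ r)"

definition shape :: "letter list \<Rightarrow> 2 \<Rightarrow> 2 \<Rightarrow> nat \<Rightarrow> letter list" where
  "shape tau j1 j2 k = tau @ [Inf j1, Ext] @ replicate k (Fin j2) @ [Inf j2, Ext]"

definition red_step :: "letter list \<Rightarrow> letter list \<Rightarrow> bool" where
  "red_step u v \<longleftrightarrow> (\<exists>x y j. u = x @ [Fin j, Inf j] @ y \<and> v = x @ [Inf j] @ y)"

definition word_equiv :: "letter list \<Rightarrow> letter list \<Rightarrow> bool" where
  "word_equiv = (\<lambda>u v. red_step u v \<or> red_step v u)\<^sup>*\<^sup>*"

end

theory Submission
  imports Defs
begin

(* For a word tau over the letters 1, 2 the matrix M_tau is the product, read from right to left,
   of the elementary matrices E_1 = [[1,1],[0,1]] and E_2 = [[1,0],[1,1]]. These generate the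
   monoid SL_2(N) of nonnegative integer matrices of determinant 1 freely: of the two rows of a
   non-identity element one dominates the other, which tells the last factor (Euclid's algorithm).
   A final admissible word is tau followed by j1^inf ext j2^k j2^inf ext, and since j1 is already
   in X, the trailing letters j2 do not change delta; so M_omega = M_tau and row j2 of M_tau is a
   nonnegative primitive vector. Trailing letters j1 of tau only change row j1 of M_tau, and they
   are removed by the equivalence together with j2^k. What remains of tau is empty or ends in j2,
   and then row j2 of M_tau is the sum of the two rows of a matrix in SL_2(N), which determines
   that matrix and hence the word. *)

lemma num2_neq_1_eq_2: "(j::2) \<noteq> 1 \<Longrightarrow> j = 2"
  using exhaust_2 by blast

lemma num2_cases_of_neq: "(j1::2) \<noteq> j2 \<Longrightarrow> j = j1 \<or> j = j2"
  by (metis exhaust_2)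

(* (a, b, c, d) stands for the matrix [[a, b], [c, d]]. *)
type_synonym mat2 = "int \<times> int \<times> int \<times> int"

fun mat2_entry :: "mat2 \<Rightarrow> 2 \<Rightarrow> 2 \<Rightarrow> int" where
  "mat2_entry (a, b, c, d) r s = (if r = 1 then (if s = 1 then a else b) else (if s = 1 then c else d))"

fun mat2_mult :: "mat2 \<Rightarrow> mat2 \<Rightarrow> mat2" where
  "mat2_mult (a, b, c, d) (p, q, r, s) = (a * p + b * r, a * q + b * s, c * p + d * r, c * q + d * s)"

fun sl2_nat :: "mat2 \<Rightarrow> bool" where
  "sl2_nat (a, b, c, d) \<longleftrightarrow> a \<ge> 0 \<and> b \<ge> 0 \<and> c \<ge> 0 \<and> d \<ge> 0 \<and> a * d - b * c = 1"

lemma sl2_nat_entry_nonneg: "sl2_nat m \<Longrightarrow> mat2_entry m r s \<ge> 0"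
  by (cases m) auto

lemma sl2_nat_diag_pos: "sl2_nat (a, b, c, d) \<Longrightarrow> a \<ge> 1 \<and> d \<ge> 1"
proof -
  assume m: "sl2_nat (a, b, c, d)"
  then have "a * d = 1 + b * c" "b * c \<ge> 0" by simp_all
  then have "a * d \<ge> 1" by linarith
  then have "a \<noteq> 0" "d \<noteq> 0" by auto
  then show ?thesis using m by simp
qed

lemma sl2_nat_entry_diag_pos: "sl2_nat m \<Longrightarrow> mat2_entry m r r \<ge> 1"
proof (cases m)
  case (fields a b c d)
  assume "sl2_nat m"
  then have "a \<ge> 1 \<and> d \<ge> 1" using fields sl2_nat_diag_pos by simp
  then show ?thesis using fields by (auto dest: num2_neq_1_eq_2)
qed

lemma sl2_nat_row_sum_pos: "sl2_nat m \<Longrightarrow> mat2_entry m 1 i + mat2_entry m 2 i \<ge> 1"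
proof (cases m)
  case (fields a b c d)
  assume "sl2_nat m"
  then have "a \<ge> 1 \<and> d \<ge> 1 \<and> b \<ge> 0 \<and> c \<ge> 0" using fields sl2_nat_diag_pos by simp
  then show ?thesis using fields by auto
qed

lemma coprime_of_lincomb_eq_1: "u * x + v * y = (1::int) \<Longrightarrow> coprime x y"
proof (rule coprimeI)
  fix c assume "u * x + v * y = 1" "c dvd x" "c dvd y"
  then have "c dvd 1" by (metis dvd_add dvd_mult)
  then show "is_unit c" by simp
qed

lemma sl2_nat_row_coprime: "sl2_nat m \<Longrightarrow> coprime (mat2_entry m r 1) (mat2_entry m r 2)"
proof (cases m)
  case (fields a b c d)
  assume "sl2_nat m"
  then have "coprime a b" "coprime c d"
    using fields coprime_of_lincomb_eq_1[of d a "- c" b] coprime_of_lincomb_eq_1[of "- b" c a d]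
    by (simp_all add: algebra_simps)
  then show ?thesis using fields by (auto dest: num2_neq_1_eq_2)
qed

text \<open>With x, y the row sums, p y - q x = 1 fixes p modulo x, and 1 \<le> p \<le> x fixes p.\<close>
lemma sl2_nat_eq_if_row_sum_eq:
  assumes m: "sl2_nat (p, q, r, s)" and m': "sl2_nat (p', q', r', s')"
    and sum: "p + r = p' + r'" "q + s = q' + s'"
  shows "(p, q, r, s) = (p', q', r', s')"
proof -
  define x where "x = p + r"
  define y where "y = q + s"
  have "p * y - q * x = 1" using m unfolding x_def y_def by (simp add: algebra_simps)
  moreover have "p' * y - q' * x = 1" using m' unfolding x_def y_def sum by (simp add: algebra_simps)
  ultimately have det: "p * y - q * x = 1" "p' * y - q' * x = 1" .
  have "coprime x y" using coprime_of_lincomb_eq_1[of "- q" x p y] det by (simp add: algebra_simps)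
  moreover have eq: "(p - p') * y = (q - q') * x" using det by (simp add: algebra_simps)
  ultimately have "x dvd p - p'" by (metis coprime_dvd_mult_left_iff dvd_triv_right)
  then obtain t where t: "p - p' = x * t" by (elim dvdE)
  have "p \<ge> 1" "p' \<ge> 1" using m m' sl2_nat_diag_pos by blast+
  moreover have "p \<le> x" "p' \<le> x" using m m' sum unfolding x_def by simp_all
  ultimately have "\<bar>x * t\<bar> < x" using t by arith
  then have "x * \<bar>t\<bar> < x * 1" using \<open>p \<ge> 1\<close> \<open>p \<le> x\<close> by (simp add: abs_mult)
  then have "\<bar>t\<bar> < 1" using \<open>p \<ge> 1\<close> \<open>p \<le> x\<close> by (simp add: mult_less_cancel_left)
  then have "t = 0" by simp
  then have "p = p'" using t by simp
  moreover have "x \<noteq> 0" using \<open>p \<ge> 1\<close> \<open>p \<le> x\<close> by simp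
  ultimately show ?thesis using eq sum by simp
qed

lemma sl2_nat_rows_comparable:
  assumes m: "sl2_nat (a, b, c, d)" and ne: "(a, b, c, d) \<noteq> (1, 0, 0, 1)"
  shows "(c \<le> a \<and> d \<le> b) \<or> (a \<le> c \<and> b \<le> d)"
proof (rule ccontr)
  assume "\<not> ?thesis"
  then consider "a < c \<and> d < b" | "c < a \<and> b < d" by linarith
  then show False
  proof cases
    case 1
    then have "(a + 1) * (d + 1) \<le> c * b" using m by (intro mult_mono) auto
    then show False using m by (simp add: algebra_simps)
  next
    case 2
    then have "(c + 1) * (b + 1) \<le> a * d" using m by (intro mult_mono) auto
    then have "b = 0" "c = 0" using m by (auto simp: algebra_simps)
    then have "a = 1" "d = 1" using m zmult_eq_1_iff by auto
    then show False using ne \<open>b = 0\<close> \<open>c = 0\<close> by simp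
  qed
qed

lemma sl2_nat_complete_row:
  fixes x y :: int
  assumes "x \<ge> 0" "y \<ge> 0" "coprime x y" "(x, y) \<noteq> (0, 1)"
  shows "\<exists>r s. sl2_nat (x, y, r, s)"
proof (cases "y = 0")
  case True
  then have "x = 1" using assms by auto
  then show ?thesis using True by (intro exI[of _ 0] exI[of _ 1]) auto
next
  case False
  then have y: "y \<ge> 1" using assms by auto
  have x: "x \<ge> 1" using assms by (cases "x = 0") auto
  obtain u v where uv: "u * x + v * y = 1" using bezout_int[of x y] assms(3) by auto
  text \<open>Shift the Bezout coefficient of x into the range 1..y; then the other one is \<le> 0.\<close>
  define t where "t = (u - 1) div y"
  define s where "s = (u - 1) mod y + 1"
  have s: "s \<ge> 1" "s = u - t * y"
    unfolding s_def t_def using y div_mult_mod_eq[of "u - 1" y] by (simp, linarith)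
  define r where "r = - (v + x * t)"
  have det: "x * s - y * r = 1" unfolding r_def s(2) using uv by (simp add: algebra_simps)
  have "1 * 1 \<le> x * s" using x s by (intro mult_mono) auto
  then have "y * r \<ge> 0" using det by linarith
  then have "r \<ge> 0" using y by (simp add: zero_le_mult_iff)
  then show ?thesis using det s(1) assms(1,2) by (intro exI[of _ r] exI[of _ s]) simp
qed

(* Letter j multiplies from the left by E_j; Dword collects the inverses of the E_j from the
   right, so that Dword tau has the columns delta tau and Mword tau is its inverse. *)
fun elem_mult_left :: "mat2 \<Rightarrow> letter \<Rightarrow> mat2" where
  "elem_mult_left (a, b, c, d) (Fin j) = (if j = 1 then (a + c, b + d, c, d) else (a, b, c + a, d + b))"
| "elem_mult_left m (Inf j) = m"
| "elem_mult_left m Ext = m"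

fun elem_inv_mult_right :: "mat2 \<Rightarrow> letter \<Rightarrow> mat2" where
  "elem_inv_mult_right (p, q, r, s) (Fin j) = (if j = 1 then (p, q - p, r, s - r) else (p - q, q, r - s, s))"
| "elem_inv_mult_right m (Inf j) = m"
| "elem_inv_mult_right m Ext = m"

definition Mword :: "letter list \<Rightarrow> mat2" where
  "Mword ts = foldl elem_mult_left (1, 0, 0, 1) ts"

definition Dword :: "letter list \<Rightarrow> mat2" where
  "Dword ts = foldl elem_inv_mult_right (1, 0, 0, 1) ts"

lemma Mword_Nil [simp]: "Mword [] = (1, 0, 0, 1)"
  by (simp add: Mword_def)

lemma Mword_snoc [simp]: "Mword (ts @ [x]) = elem_mult_left (Mword ts) x"
  by (simp add: Mword_def)

lemma Dword_Nil [simp]: "Dword [] = (1, 0, 0, 1)"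
  by (simp add: Dword_def)

lemma Dword_snoc [simp]: "Dword (ts @ [x]) = elem_inv_mult_right (Dword ts) x"
  by (simp add: Dword_def)

lemma Dword_Mword_inverse:
  "mat2_mult (Dword ts) (Mword ts) = (1, 0, 0, 1) \<and> mat2_mult (Mword ts) (Dword ts) = (1, 0, 0, 1)"
proof (induction ts rule: rev_induct)
  case (snoc x ts)
  obtain p q r s where D: "Dword ts = (p, q, r, s)" by (cases "Dword ts")
  obtain a b c d where M: "Mword ts = (a, b, c, d)" by (cases "Mword ts")
  have inv: "p * a + q * c = 1" "p * b + q * d = 0" "r * a + s * c = 0" "r * b + s * d = 1"
     "a * p + b * r = 1" "a * q + b * s = 0" "c * p + d * r = 0" "c * q + d * s = 1"
    using snoc D M by auto
  show ?case
    using inv D M by (cases x) (auto simp: algebra_simps)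
qed simp

lemma sl2_nat_Mword: "sl2_nat (Mword ts)"
proof (induction ts rule: rev_induct)
  case (snoc x ts)
  then show ?case by (cases "Mword ts"; cases x) (auto simp: algebra_simps)
qed simp

lemma Mword_snoc_row: "mat2_entry (Mword (ts @ [Fin j])) j i = mat2_entry (Mword ts) 1 i + mat2_entry (Mword ts) 2 i"
  by (cases "Mword ts") (auto dest: num2_neq_1_eq_2)

lemma Mword_eq_id_iff:
  assumes "set ts \<subseteq> range Fin"
  shows "Mword ts = (1, 0, 0, 1) \<longleftrightarrow> ts = []"
proof
  assume id: "Mword ts = (1, 0, 0, 1)"
  show "ts = []"
  proof (cases ts rule: rev_cases)
    case (snoc rho x)
    obtain j where "x = Fin j" using assms snoc by auto
    moreover obtain a b c d where M: "Mword rho = (a, b, c, d)" by (cases "Mword rho")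
    moreover have "a \<ge> 1 \<and> d \<ge> 1" "sl2_nat (a, b, c, d)"
      using sl2_nat_diag_pos sl2_nat_Mword M by metis+
    ultimately show ?thesis using id snoc by (auto split: if_splits)
  qed
qed simp

lemma Mword_inj:
  "set s1 \<subseteq> range Fin \<Longrightarrow> set s2 \<subseteq> range Fin \<Longrightarrow> Mword s1 = Mword s2 \<Longrightarrow> s1 = s2"
proof (induction s1 arbitrary: s2 rule: rev_induct)
  case Nil
  then show ?case using Mword_eq_id_iff[of s2] by auto
next
  case (snoc x s1)
  obtain j where x: "x = Fin j" using snoc.prems by auto
  have "s2 \<noteq> []" using snoc.prems Mword_eq_id_iff[of "s1 @ [x]"] by auto
  then obtain s2' j' where s2: "s2 = s2' @ [Fin j']" using snoc.prems(2) by (cases s2 rule: rev_cases) auto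
  obtain a b c d where M: "Mword s1 = (a, b, c, d)" by (cases "Mword s1")
  obtain a' b' c' d' where M': "Mword s2' = (a', b', c', d')" by (cases "Mword s2'")
  have sl2: "sl2_nat (a, b, c, d)" "sl2_nat (a', b', c', d')" using sl2_nat_Mword M M' by metis+
  have step: "elem_mult_left (a, b, c, d) (Fin j) = elem_mult_left (a', b', c', d') (Fin j')"
    using snoc.prems(3) M M' x s2 by simp
  have "j = j'"
  proof (rule ccontr)
    assume "j \<noteq> j'"
    then have "j = 1 \<and> j' = 2 \<or> j = 2 \<and> j' = 1" by (metis exhaust_2)
    then show False using step sl2 sl2_nat_diag_pos[OF sl2(1)] sl2_nat_diag_pos[OF sl2(2)] by auto
  qed
  then have "Mword s1 = Mword s2'" using step M M' by (auto split: if_splits)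
  then show ?case using snoc s2 x \<open>j = j'\<close> by simp
qed

lemma Mword_surj:
  "sl2_nat (a, b, c, d) \<Longrightarrow> \<exists>tau. set tau \<subseteq> range Fin \<and> Mword tau = (a, b, c, d)"
proof (induction "nat (a + b + c + d)" arbitrary: a b c d rule: less_induct)
  case less
  show ?case
  proof (cases "(a, b, c, d) = (1, 0, 0, 1)")
    case True
    then show ?thesis by (intro exI[of _ "[]"]) auto
  next
    case False
    have "a \<ge> 1 \<and> d \<ge> 1" using less.prems by (rule sl2_nat_diag_pos)
    from sl2_nat_rows_comparable[OF less.prems False] show ?thesis
    proof
      assume h: "c \<le> a \<and> d \<le> b"
      have "sl2_nat (a - c, b - d, c, d)" using less.prems h by (simp add: algebra_simps)
      moreover have "nat ((a - c) + (b - d) + c + d) < nat (a + b + c + d)"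
        using h less.prems \<open>a \<ge> 1 \<and> d \<ge> 1\<close> by auto
      ultimately obtain tau where "set tau \<subseteq> range Fin" "Mword tau = (a - c, b - d, c, d)"
        using less.hyps by blast
      then show ?thesis by (intro exI[of _ "tau @ [Fin 1]"]) auto
    next
      assume h: "a \<le> c \<and> b \<le> d"
      have "sl2_nat (a, b, c - a, d - b)" using less.prems h by (simp add: algebra_simps)
      moreover have "nat (a + b + (c - a) + (d - b)) < nat (a + b + c + d)"
        using h less.prems \<open>a \<ge> 1 \<and> d \<ge> 1\<close> by auto
      ultimately obtain tau where "set tau \<subseteq> range Fin" "Mword tau = (a, b, c - a, d - b)"
        using less.hyps by blast
      then show ?thesis by (intro exI[of _ "tau @ [Fin 2]"]) auto
    qed
  qed
qed

definition real_mat2 :: "mat2 \<Rightarrow> real^2^2" where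
  "real_mat2 m = (\<chi> r s. of_int (mat2_entry m r s))"

lemma real_mat2_mult: "real_mat2 m ** real_mat2 n = real_mat2 (mat2_mult m n)"
  by (cases m; cases n) (auto simp: real_mat2_def matrix_matrix_mult_def vec_eq_iff forall_2 sum_2)

lemma real_mat2_id: "real_mat2 (1, 0, 0, 1) = mat 1"
  by (auto simp: real_mat2_def mat_def vec_eq_iff forall_2)

lemma matrix_inv_unique:
  fixes A :: "'a::semiring_1^'n^'m" and B :: "'a^'m^'n"
  assumes AB: "A ** B = mat 1" and BA: "B ** A = mat 1"
  shows "matrix_inv A = B"
proof -
  have "A ** matrix_inv A = mat 1 \<and> matrix_inv A ** A = mat 1"
    unfolding matrix_inv_def using AB BA by (rule someI[of _ B, OF conjI])
  then have "matrix_inv A = matrix_inv A ** (A ** B)" and "matrix_inv A ** A = mat 1"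
    using AB by simp_all
  then show ?thesis by (simp add: matrix_mul_assoc)
qed

lemma Xw_Fin_word: "set tau \<subseteq> range Fin \<Longrightarrow> Xw tau = {}"
  unfolding Xw_def by (auto dest!: nth_mem)

lemma in_Xw_Inf_Ext: "j \<in> Xw (xs @ [Inf j, Ext] @ ys)"
  unfolding Xw_def by (auto intro!: exI[of _ "length xs"] simp: nth_append)

lemma delta_Fin_word: "set tau \<subseteq> range Fin \<Longrightarrow> delta tau c = (\<chi> r. of_int (mat2_entry (Dword tau) r c))"
proof (induction tau arbitrary: c rule: rev_induct)
  case Nil
  then show ?case by (auto simp: delta_def vec_eq_iff axis_def dest: num2_neq_1_eq_2)
next
  case (snoc x ts)
  then obtain j where x: "x = Fin j" by auto
  have ts: "set ts \<subseteq> range Fin" using snoc by auto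
  have "delta (ts @ [x]) c = (if c = j then delta ts c else delta ts c - delta ts j)"
    using Xw_Fin_word[OF ts] by (simp add: delta_def x)
  then show ?case using snoc.IH[OF ts] x
    by (cases "Dword ts") (auto simp: vec_eq_iff forall_2 dest: num2_neq_1_eq_2)
qed

text \<open>Once j1 is in X, a letter j2 changes neither delta^j1 nor delta^j2.\<close>
lemma delta_rev_replicate_after_Inf_Ext:
  "j1 \<noteq> j2 \<Longrightarrow> delta_rev (replicate k (Fin j2) @ Ext # Inf j1 # rest) c = delta_rev rest c"
proof (induction k)
  case (Suc k)
  have "j1 \<in> Xw (rev (replicate k (Fin j2) @ Ext # Inf j1 # rest))"
    using in_Xw_Inf_Ext[of j1 "rev rest" "replicate k (Fin j2)"] by simp
  then show ?case using Suc num2_cases_of_neq[OF Suc.prems, of c] by auto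
qed simp

lemma delta_shape: "j1 \<noteq> j2 \<Longrightarrow> delta (shape tau j1 j2 k) c = delta tau c"
  unfolding delta_def shape_def using delta_rev_replicate_after_Inf_Ext[of j1 j2 k "rev tau" c] by simp

lemma Mmat_shape:
  assumes "set tau \<subseteq> range Fin" "j1 \<noteq> j2"
  shows "Mmat (shape tau j1 j2 k) = real_mat2 (Mword tau)"
proof -
  have "(\<chi> r c. delta (shape tau j1 j2 k) c $ r) = real_mat2 (Dword tau)"
    using delta_shape[OF assms(2)] delta_Fin_word[OF assms(1)] by (simp add: vec_eq_iff real_mat2_def)
  then show ?thesis
    unfolding Mmat_def using Dword_Mword_inverse[of tau]
    by (simp add: matrix_inv_unique real_mat2_mult real_mat2_id)
qed

lemma Mmat_shape_entry:
  "set tau \<subseteq> range Fin \<Longrightarrow> j1 \<noteq> j2 \<Longrightarrow> Mmat (shape tau j1 j2 k) $ r $ c = of_int (mat2_entry (Mword tau) r c)"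
  by (simp add: Mmat_shape real_mat2_def)

lemma length_shape: "length (shape tau j1 j2 k) = length tau + 4 + k"
  by (simp add: shape_def)

lemma nth_shape:
  "q < length (shape tau j1 j2 k) \<Longrightarrow> shape tau j1 j2 k ! q =
    (if q < length tau then tau ! q else if q = length tau then Inf j1
     else if q = Suc (length tau) then Ext else if q < length tau + 2 + k then Fin j2
     else if q = length tau + 2 + k then Inf j2 else Ext)"
  by (auto simp: shape_def nth_append nth_Cons split: nat.splits)

lemma admissible_final_shape:
  assumes tau: "set tau \<subseteq> range Fin" and j: "j1 \<noteq> j2"
  shows "admissible (shape tau j1 j2 k) \<and> final (shape tau j1 j2 k)"
proof -
  let ?w = "shape tau j1 j2 k" and ?L = "length tau"
  have tau_nth: "tau ! q \<noteq> Inf j \<and> tau ! q \<noteq> Ext" if "q < ?L" for q j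
    using tau that by (auto dest!: nth_mem)
  note w_nth = nth_shape[of _ tau j1 j2 k] length_shape[of tau j1 j2 k]
  have Inf_pos: "q = ?L \<and> j = j1 \<or> q = ?L + 2 + k \<and> j = j2"
    if "q < length ?w" "?w ! q = Inf j" for q j
    using that w_nth tau_nth[of q j] by (auto split: if_splits)
  have Ext_pos: "q = Suc ?L \<or> q = ?L + 3 + k" if "q < length ?w" "?w ! q = Ext" for q
    using that w_nth tau_nth[of q] by (auto split: if_splits)
  have "?w ! q \<noteq> Fin j \<and> ?w ! q \<noteq> Inf j" if "p < q" "q < length ?w" "?w ! p = Inf j" for p q j
    using that Inf_pos[of p j] w_nth j by (auto split: if_splits)
  moreover have "?w ! Suc p = Ext" if "Suc p < length ?w" "?w ! p = Inf j" for p j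
    using that Inf_pos[of p j] w_nth by auto
  moreover have "\<exists>q j. Suc q = p \<and> ?w ! q = Inf j" if "p < length ?w" "?w ! p = Ext" for p
    using Ext_pos[OF that]
  proof
    assume "p = Suc ?L"
    then show ?thesis using w_nth by (intro exI[of _ ?L] exI[of _ j1]) auto
  next
    assume "p = ?L + 3 + k"
    then show ?thesis using w_nth by (intro exI[of _ "?L + 2 + k"] exI[of _ j2]) auto
  qed
  ultimately have "admissible ?w"
    unfolding admissible_def by blast
  moreover have "j \<in> Xw ?w" for j
    using num2_cases_of_neq[OF j, of j] in_Xw_Inf_Ext[of j1 tau "replicate k (Fin j2) @ [Inf j2, Ext]"]
      in_Xw_Inf_Ext[of j2 "tau @ [Inf j1, Ext] @ replicate k (Fin j2)" "[]"]
    unfolding shape_def by auto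
  then have "final ?w" unfolding final_def by blast
  ultimately show ?thesis by blast
qed

lemma eq_shape_take:
  assumes len: "length w = pb + 2" and "pa + 2 \<le> pb"
    and a: "w ! pa = Inf j1" "w ! Suc pa = Ext"
    and middle: "\<And>q. Suc pa < q \<Longrightarrow> q < pb \<Longrightarrow> w ! q = Fin j2"
    and b: "w ! pb = Inf j2" "w ! Suc pb = Ext"
  shows "w = shape (take pa w) j1 j2 (pb - pa - 2)"
proof (rule nth_equalityI)
  show "length w = length (shape (take pa w) j1 j2 (pb - pa - 2))"
    using len \<open>pa + 2 \<le> pb\<close> by (simp add: length_shape)
  fix q assume q: "q < length w"
  have "length (take pa w) = pa" "pa + 2 + (pb - pa - 2) = pb"
    using \<open>pa + 2 \<le> pb\<close> len by simp_all
  moreover have "q < length (shape (take pa w) j1 j2 (pb - pa - 2))"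
    using q len \<open>pa + 2 \<le> pb\<close> by (simp add: length_shape)
  ultimately have shape_q: "shape (take pa w) j1 j2 (pb - pa - 2) ! q =
      (if q < pa then take pa w ! q else if q = pa then Inf j1 else if q = Suc pa then Ext
       else if q < pb then Fin j2 else if q = pb then Inf j2 else Ext)"
    by (simp only: nth_shape)
  consider "q < pa" | "q = pa" | "q = Suc pa" | "Suc pa < q \<and> q < pb" | "q = pb" | "q = Suc pb"
    using q len by linarith
  then show "w ! q = shape (take pa w) j1 j2 (pb - pa - 2) ! q"
    unfolding shape_q by cases (use a b middle \<open>pa + 2 \<le> pb\<close> in simp_all)
qed

lemma admissible_Inf_unique:
  assumes "admissible w" "p < length w" "q < length w" "w ! p = Inf j" "w ! q = Inf j"
  shows "p = q"
  using assms unfolding admissible_def by (metis linorder_neqE_nat)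

lemma admissible_not_Fin_after_Inf:
  "admissible w \<Longrightarrow> w ! p = Inf j \<Longrightarrow> p < q \<Longrightarrow> q < length w \<Longrightarrow> w ! q \<noteq> Fin j"
  unfolding admissible_def by blast

lemma admissible_Ext_after_Inf:
  "admissible w \<Longrightarrow> q < length w \<Longrightarrow> w ! q = Ext \<Longrightarrow> \<exists>p j. q = Suc p \<and> w ! p = Inf j"
  unfolding admissible_def by metis

lemma admissible_eq_shape:
  assumes adm: "admissible w" and j: "j1 \<noteq> j2" and "pa < pb"
    and a: "w ! pa = Inf j1" "w ! Suc pa = Ext"
    and b: "w ! pb = Inf j2" "w ! Suc pb = Ext" "Suc pb < length w"
  shows "set (take pa w) \<subseteq> range Fin \<and> w = shape (take pa w) j1 j2 (pb - pa - 2)"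
proof -
  have Inf_pos: "q = pa \<or> q = pb" if "q < length w" "w ! q = Inf j" for q j
    using num2_cases_of_neq[OF j, of j] admissible_Inf_unique[OF adm] that a b \<open>pa < pb\<close> by fastforce
  have Ext_pos: "q = Suc pa \<or> q = Suc pb" if q: "q < length w" "w ! q = Ext" for q
  proof -
    obtain p j where "q = Suc p" "w ! p = Inf j" using admissible_Ext_after_Inf[OF adm q] by blast
    then show ?thesis using Inf_pos[of p j] q by auto
  qed
  have Fin_pos: "\<exists>j. w ! q = Fin j" if "q < length w" "q \<notin> {pa, Suc pa, pb, Suc pb}" for q
    using Inf_pos Ext_pos that by (cases "w ! q") auto
  have "pa + 2 \<le> pb" using a b \<open>pa < pb\<close> by (cases "pb = Suc pa") auto
  have len: "length w = pb + 2"
  proof (rule ccontr)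
    assume "length w \<noteq> pb + 2"
    then have q: "pb + 2 < length w" using b by linarith
    then obtain j where "w ! (pb + 2) = Fin j" using Fin_pos[of "pb + 2"] \<open>pa < pb\<close> by auto
    then show False using num2_cases_of_neq[OF j, of j] q \<open>pa < pb\<close>
        admissible_not_Fin_after_Inf[OF adm a(1), of "pb + 2"]
        admissible_not_Fin_after_Inf[OF adm b(1), of "pb + 2"] by auto
  qed
  have prefix: "w ! q \<in> range Fin" if "q < pa" for q
    using Fin_pos[of q] that \<open>pa < pb\<close> len by force
  have middle: "w ! q = Fin j2" if "Suc pa < q" "q < pb" for q
    using Fin_pos[of q] that len num2_cases_of_neq[OF j] admissible_not_Fin_after_Inf[OF adm a(1), of q]
    by fastforce
  have "w = shape (take pa w) j1 j2 (pb - pa - 2)"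
    using eq_shape_take[OF len \<open>pa + 2 \<le> pb\<close> a(1,2) middle b(1,2)] .
  moreover have "set (take pa w) \<subseteq> range Fin"
    using prefix by (auto simp: in_set_conv_nth)
  ultimately show ?thesis by blast
qed

lemma admissible_final_eq_shape:
  assumes "admissible w" "final w"
  shows "\<exists>tau j1 j2 k. set tau \<subseteq> range Fin \<and> j1 \<noteq> j2 \<and> w = shape tau j1 j2 k"
proof -
  obtain p1 where p1: "Suc p1 < length w" "w ! p1 = Inf 1" "w ! Suc p1 = Ext"
    using assms(2) unfolding final_def Xw_def by blast
  obtain p2 where p2: "Suc p2 < length w" "w ! p2 = Inf 2" "w ! Suc p2 = Ext"
    using assms(2) unfolding final_def Xw_def by blast
  have "p1 < p2 \<or> p2 < p1" using p1(2) p2(2) by (cases "p1 = p2") auto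
  then show ?thesis
  proof
    assume "p1 < p2"
    then have "set (take p1 w) \<subseteq> range Fin \<and> w = shape (take p1 w) 1 2 (p2 - p1 - 2)"
      using admissible_eq_shape[OF assms(1), of 1 2 p1 p2] p1 p2 by simp
    moreover have "(1::2) \<noteq> 2" by simp
    ultimately show ?thesis by blast
  next
    assume "p2 < p1"
    then have "set (take p2 w) \<subseteq> range Fin \<and> w = shape (take p2 w) 2 1 (p1 - p2 - 2)"
      using admissible_eq_shape[OF assms(1), of 2 1 p2 p1] p1 p2 by simp
    moreover have "(2::2) \<noteq> 1" by simp
    ultimately show ?thesis by blast
  qed
qed

lemma Mmat_shape_row:
  assumes tau: "set tau \<subseteq> range Fin" and j: "j1 \<noteq> j2"
  shows "(\<forall>i. Mmat (shape tau j1 j2 k) $ j2 $ i \<ge> 0)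
    \<and> (\<exists>a b::int. Mmat (shape tau j1 j2 k) $ j2 $ 1 = of_int a \<and> Mmat (shape tau j1 j2 k) $ j2 $ 2 = of_int b
        \<and> coprime a b)
    \<and> (\<forall>i. Mmat (shape tau j1 j2 k) $ j2 = axis i 1 \<longrightarrow> i = j2)"
proof -
  let ?N = "Mmat (shape tau j1 j2 k) $ j2"
  have N: "?N $ i = of_int (mat2_entry (Mword tau) j2 i)" for i
    using Mmat_shape_entry[OF tau j] by simp
  have "?N $ i \<ge> 0" for i
    unfolding N using sl2_nat_entry_nonneg[OF sl2_nat_Mword] by simp
  moreover have "coprime (mat2_entry (Mword tau) j2 1) (mat2_entry (Mword tau) j2 2)"
    using sl2_nat_row_coprime[OF sl2_nat_Mword] .
  moreover have "i = j2" if "?N = axis i 1" for i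
  proof -
    have "?N $ j2 \<ge> 1" unfolding N using sl2_nat_entry_diag_pos[OF sl2_nat_Mword] by simp
    then show ?thesis using that by (auto simp: axis_def split: if_splits)
  qed
  ultimately show ?thesis using N by blast
qed

lemma word_equiv_symp: "symp word_equiv"
  unfolding word_equiv_def by (rule symp_rtranclp) (auto simp: symp_def)

lemma word_equiv_trans: "word_equiv u v \<Longrightarrow> word_equiv v w \<Longrightarrow> word_equiv u w"
  unfolding word_equiv_def by (rule rtranclp_trans)

lemma word_equiv_if_red_step: "red_step u v \<Longrightarrow> word_equiv u v"
  unfolding word_equiv_def by (rule r_into_rtranclp) blast

lemma word_equiv_shape_drop_trailing:
  "word_equiv (shape (s @ replicate m (Fin j1)) j1 j2 k) (shape s j1 j2 k)"
proof (induction m)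
  case 0
  then show ?case by (simp add: word_equiv_def)
next
  case (Suc m)
  have "red_step (shape (s @ replicate (Suc m) (Fin j1)) j1 j2 k) (shape (s @ replicate m (Fin j1)) j1 j2 k)"
    unfolding red_step_def shape_def
    by (intro exI[of _ "s @ replicate m (Fin j1)"] exI[of _ "Ext # replicate k (Fin j2) @ [Inf j2, Ext]"]
        exI[of _ j1]) (simp add: replicate_append_same)
  then show ?case using Suc word_equiv_if_red_step word_equiv_trans by blast
qed

lemma word_equiv_shape_drop_power: "word_equiv (shape s j1 j2 k) (shape s j1 j2 0)"
proof (induction k)
  case 0
  then show ?case by (simp add: word_equiv_def)
next
  case (Suc k)
  have "red_step (shape s j1 j2 (Suc k)) (shape s j1 j2 k)"
    unfolding red_step_def shape_def
    by (intro exI[of _ "s @ [Inf j1, Ext] @ replicate k (Fin j2)"] exI[of _ "[Ext]"] exI[of _ j2])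
      (simp add: replicate_append_same)
  then show ?case using Suc word_equiv_if_red_step word_equiv_trans by blast
qed

lemma split_trailing_replicate: "\<exists>s m. xs = s @ replicate m x \<and> (s = [] \<or> last s \<noteq> x)"
proof (induction xs rule: rev_induct)
  case (snoc y xs)
  then obtain s m where s: "xs = s @ replicate m x" "s = [] \<or> last s \<noteq> x" by blast
  show ?case
  proof (cases "y = x")
    case True
    then show ?thesis using s by (intro exI[of _ s] exI[of _ "Suc m"]) (simp add: replicate_append_same)
  qed (intro exI[of _ "xs @ [y]"] exI[of _ 0]; simp)
qed simp

lemma Mword_append_replicate_row:
  "j1 \<noteq> j2 \<Longrightarrow> mat2_entry (Mword (s @ replicate m (Fin j1))) j2 i = mat2_entry (Mword s) j2 i"
proof (induction m)
  case (Suc m)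
  have "s @ replicate (Suc m) (Fin j1) = (s @ replicate m (Fin j1)) @ [Fin j1]"
    by (simp add: replicate_append_same)
  then have "Mword (s @ replicate (Suc m) (Fin j1)) = elem_mult_left (Mword (s @ replicate m (Fin j1))) (Fin j1)"
    by (simp only: Mword_snoc)
  then show ?case using Suc by (cases "Mword (s @ replicate m (Fin j1))") (auto dest: num2_neq_1_eq_2)
qed simp

lemma Fin_word_eq_if_Mword_row_eq:
  assumes j: "j1 \<noteq> j2"
    and s: "set s \<subseteq> range Fin" "s = [] \<or> last s \<noteq> Fin j1"
    and s': "set s' \<subseteq> range Fin" "s' = [] \<or> last s' \<noteq> Fin j1"
    and row: "\<And>i. mat2_entry (Mword s) j2 i = mat2_entry (Mword s') j2 i"
  shows "s = s'"
proof -
  have ends: "t = [] \<or> (\<exists>rho. set rho \<subseteq> range Fin \<and> t = rho @ [Fin j2])"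
    if t: "set t \<subseteq> range Fin" "t = [] \<or> last t \<noteq> Fin j1" for t
  proof (cases t rule: rev_cases)
    case (snoc rho y)
    then obtain j where "y = Fin j" using t by auto
    then show ?thesis using t snoc num2_cases_of_neq[OF j, of j] by auto
  qed simp
  have snoc_entry: "mat2_entry (Mword (rho @ [Fin j2])) j2 j1 \<ge> 1" for rho
    using Mword_snoc_row[of rho j2 j1] sl2_nat_row_sum_pos[OF sl2_nat_Mword, of rho j1] by linarith
  have Nil_entry: "mat2_entry (Mword []) j2 j1 = 0"
    using j by (auto dest: num2_neq_1_eq_2)
  from ends[OF s] ends[OF s'] show ?thesis
  proof (elim disjE exE conjE)
    fix rho rho' assume rho: "set rho \<subseteq> range Fin" "s = rho @ [Fin j2]"
      and rho': "set rho' \<subseteq> range Fin" "s' = rho' @ [Fin j2]"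
    obtain a b c d where M: "Mword rho = (a, b, c, d)" by (cases "Mword rho")
    obtain a' b' c' d' where M': "Mword rho' = (a', b', c', d')" by (cases "Mword rho'")
    have "a + c = a' + c'" "b + d = b' + d'"
      using row[of 1] row[of 2] Mword_snoc_row[of rho j2] Mword_snoc_row[of rho' j2] rho(2) rho'(2) M M'
      by (simp_all del: Mword_snoc)
    then have "Mword rho = Mword rho'"
      using sl2_nat_eq_if_row_sum_eq sl2_nat_Mword M M' by metis
    then show ?thesis using Mword_inj rho rho' by simp
  next
    fix rho assume "s = []" "s' = rho @ [Fin j2]"
    then show ?thesis using row[of j1] snoc_entry[of rho] Nil_entry by (simp del: Mword_snoc)
  next
    fix rho assume "s' = []" "s = rho @ [Fin j2]"
    then show ?thesis using row[of j1] snoc_entry[of rho] Nil_entry by (simp del: Mword_snoc)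
  qed simp
qed

lemma word_equiv_if_Mmat_shape_row_eq:
  assumes tau: "set tau \<subseteq> range Fin" "j1 \<noteq> j2" and tau': "set tau' \<subseteq> range Fin" "j1 \<noteq> j2'"
    and eq: "Mmat (shape tau j1 j2 k) $ j2 = Mmat (shape tau' j1 j2' k') $ j2'"
  shows "word_equiv (shape tau j1 j2 k) (shape tau' j1 j2' k')"
proof -
  have j2': "j2' = j2" using num2_cases_of_neq[OF tau(2), of j2'] tau'(2) by auto
  obtain s m where sm: "tau = s @ replicate m (Fin j1)" "s = [] \<or> last s \<noteq> Fin j1"
    using split_trailing_replicate[of tau "Fin j1"] by blast
  obtain s' m' where sm': "tau' = s' @ replicate m' (Fin j1)" "s' = [] \<or> last s' \<noteq> Fin j1"
    using split_trailing_replicate[of tau' "Fin j1"] by blast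
  have "mat2_entry (Mword s) j2 i = mat2_entry (Mword s') j2 i" for i
  proof -
    have "Mmat (shape tau j1 j2 k) $ j2 $ i = Mmat (shape tau' j1 j2 k') $ j2 $ i"
      using eq j2' by simp
    then have "mat2_entry (Mword tau) j2 i = mat2_entry (Mword tau') j2 i"
      unfolding Mmat_shape_entry[OF tau] Mmat_shape_entry[OF tau'(1) tau(2)] by simp
    then show ?thesis
      unfolding sm(1) sm'(1) Mword_append_replicate_row[OF tau(2)] .
  qed
  moreover have "set s \<subseteq> range Fin" "set s' \<subseteq> range Fin" using tau(1) tau'(1) sm(1) sm'(1) by auto
  ultimately have "s = s'" using Fin_word_eq_if_Mword_row_eq[OF tau(2)] sm(2) sm'(2) by blast
  have to_s: "word_equiv (shape tau j1 j2 k) (shape s j1 j2 0)"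
    unfolding sm(1)
    using word_equiv_shape_drop_trailing[of s m j1 j2 k] word_equiv_shape_drop_power[of s j1 j2 k]
    by (rule word_equiv_trans)
  have "word_equiv (shape tau' j1 j2 k') (shape s j1 j2 0)"
    unfolding sm'(1) \<open>s = s'\<close>
    using word_equiv_shape_drop_trailing[of s' m' j1 j2 k'] word_equiv_shape_drop_power[of s' j1 j2 k']
    by (rule word_equiv_trans)
  then have from_s: "word_equiv (shape s j1 j2 0) (shape tau' j1 j2' k')"
    unfolding j2' using word_equiv_symp by (rule sympD[rotated])
  show ?thesis using to_s from_s by (rule word_equiv_trans)
qed

lemma exists_Fin_word_Mmat_shape_row:
  assumes ab: "a \<ge> 0" "b \<ge> 0" "coprime a b"
    and N: "N $ 1 = of_int a" "N $ 2 = of_int b" "N \<noteq> axis j1 1"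
  shows "\<exists>tau j2. set tau \<subseteq> range Fin \<and> j1 \<noteq> j2 \<and> Mmat (shape tau j1 j2 0) $ j2 = N"
proof (cases "j1 = 1")
  case True
  have "(b, a) \<noteq> (0, 1)" using N True by (auto simp: vec_eq_iff forall_2 axis_def)
  then obtain r s where "sl2_nat (b, a, r, s)"
    using sl2_nat_complete_row[of b a] ab by (auto simp: coprime_commute)
  then have "sl2_nat (s, r, a, b)" by (simp add: algebra_simps)
  then obtain tau where tau: "set tau \<subseteq> range Fin" "Mword tau = (s, r, a, b)" using Mword_surj by blast
  have "Mmat (shape tau j1 2 0) $ 2 = N"
    using Mmat_shape_entry[OF tau(1)] True tau(2) N by (simp add: vec_eq_iff forall_2)
  then show ?thesis using tau(1) True by (intro exI[of _ tau] exI[of _ 2]) simp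
next
  case False
  then have j1: "j1 = 2" by (rule num2_neq_1_eq_2)
  have "(a, b) \<noteq> (0, 1)" using N j1 by (auto simp: vec_eq_iff forall_2 axis_def)
  then obtain r s where "sl2_nat (a, b, r, s)" using sl2_nat_complete_row ab by blast
  then obtain tau where tau: "set tau \<subseteq> range Fin" "Mword tau = (a, b, r, s)" using Mword_surj by blast
  have "Mmat (shape tau j1 1 0) $ 1 = N"
    using Mmat_shape_entry[OF tau(1)] j1 tau(2) N by (simp add: vec_eq_iff forall_2)
  then show ?thesis using tau(1) j1 by (intro exI[of _ tau] exI[of _ 1]) simp
qed

theorem mainTheorem14:
  shows
  "(\<forall>\<omega>. admissible \<omega> \<and> final \<omega> \<longrightarrow>
      (\<exists>\<tau> j1 j2 k. set \<tau> \<subseteq> range Fin \<and> j1 \<noteq> j2 \<and> \<omega> = shape \<tau> j1 j2 k))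
   \<and> (\<forall>\<omega> \<tau> j1 j2 k. admissible \<omega> \<and> final \<omega> \<and> set \<tau> \<subseteq> range Fin \<and> j1 \<noteq> j2
        \<and> \<omega> = shape \<tau> j1 j2 k \<longrightarrow>
        (\<forall>i. Mmat \<omega> $ j2 $ i \<ge> 0)
        \<and> (\<exists>a b::int. Mmat \<omega> $ j2 $ 1 = of_int a \<and> Mmat \<omega> $ j2 $ 2 = of_int b \<and> coprime a b)
        \<and> (\<forall>i. Mmat \<omega> $ j2 = axis i 1 \<longrightarrow> i = j2))
   \<and> (\<forall>\<omega> \<omega>' \<tau> \<tau>' j1 j2 j2' k k'.
        admissible \<omega> \<and> final \<omega> \<and> set \<tau> \<subseteq> range Fin \<and> j1 \<noteq> j2 \<and> \<omega> = shape \<tau> j1 j2 k \<and>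
        admissible \<omega>' \<and> final \<omega>' \<and> set \<tau>' \<subseteq> range Fin \<and> j1 \<noteq> j2' \<and> \<omega>' = shape \<tau>' j1 j2' k' \<and>
        Mmat \<omega> $ j2 = Mmat \<omega>' $ j2' \<longrightarrow> word_equiv \<omega> \<omega>')
   \<and> (\<forall>(N::real^2) j1. (\<exists>a b::int. a \<ge> 0 \<and> b \<ge> 0 \<and> coprime a b \<and> N $ 1 = of_int a \<and> N $ 2 = of_int b)
        \<and> N \<noteq> axis j1 1 \<longrightarrow>
        (\<exists>\<tau> j2 k. set \<tau> \<subseteq> range Fin \<and> j1 \<noteq> j2 \<and> admissible (shape \<tau> j1 j2 k)
           \<and> final (shape \<tau> j1 j2 k) \<and> Mmat (shape \<tau> j1 j2 k) $ j2 = N))"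
  apply (intro conjI allI impI; (elim conjE exE)?)
  subgoal by (rule admissible_final_eq_shape)
  subgoal using Mmat_shape_row by blast
  subgoal using Mmat_shape_row by blast
  subgoal using Mmat_shape_row by blast
  subgoal using word_equiv_if_Mmat_shape_row_eq by blast
  subgoal using exists_Fin_word_Mmat_shape_row admissible_final_shape by blast
  done

end
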